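(* Let a linear first order system with no zero order equations be involutive and written, in $\delta$-regular coordinates $(x^1,\dots,x^n)$, in solved form with respect to its principal first order jets (expressed in terms of parametric jets). Then for each $i=1,\dots,n$, the subsystem consisting of all equations of class $1,\dots,i$ contains only the derivations $d_1,\dots,d_i$ and is still involutive, when the independent variables are ordered as $x^{i+1},\dots,x^n,x^1,\dots,x^i$.
   Context: $K$ is a differential field with commuting derivations; unknowns $y^1,\dots,y^m$, $y^k_j=d_jy^k$. Classes and multiplicative variables: solve the maximal number of equations with respect to jets of class $n$ (jets $y^k_n$), then the maximal number of remaining ones with respect to jets of class $n-1$, etc.; an equation of class $i$ contains no jet $y^k_j$ with $j>i$ and has multiplicative variables $x^1,\dots,x^i$, the others being non-multiplicative. The system is involutive if it is formally integrable and its first prolongation is obtained by prolonging each equation only with respect to its multiplicative variables. "No zero order equations" means the system projects onto the full space of zero order jets. *)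

theory Defs
  imports Main
begin

text \<open>Independent variables x^1..x^n are indexed by 1..n, unknowns y^1..y^m by 1..m.
A jet y^k_mu is a pair (k, mu) with mu a multi-index supported in {1..n}.
An (affine) linear differential form over K is a coefficient function on jets;
the entry at None is the constant term.  The equation is "form = 0".\<close>

type_synonym jet = "nat \<times> (nat \<Rightarrow> nat)"
type_synonym 'a lform = "jet option \<Rightarrow> 'a"

definition diff_field :: "nat \<Rightarrow> (nat \<Rightarrow> 'a::field \<Rightarrow> 'a) \<Rightarrow> bool" where
  "diff_field n D \<longleftrightarrow>
     (\<forall>i\<in>{1..n}. \<forall>a b. D i (a + b) = D i a + D i b \<and> D i (a * b) = D i a * b + a * D i b)
   \<and> (\<forall>i\<in>{1..n}. \<forall>j\<in>{1..n}. \<forall>a. D i (D j a) = D j (D i a))"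

definition unitv :: "nat \<Rightarrow> nat \<Rightarrow> nat" where
  "unitv j = (\<lambda>l. if l = j then 1 else 0)"

definition wf_form :: "nat \<Rightarrow> nat \<Rightarrow> 'a::zero lform \<Rightarrow> bool" where
  "wf_form n m e \<longleftrightarrow> finite {x. e x \<noteq> 0} \<and>
     (\<forall>k \<mu>. e (Some (k, \<mu>)) \<noteq> 0 \<longrightarrow> k \<in> {1..m} \<and> (\<forall>l. l \<notin> {1..n} \<longrightarrow> \<mu> l = 0))"

definition ford :: "nat \<Rightarrow> 'a::zero lform \<Rightarrow> nat" where
  "ford n e = Max (insert 0 {sum \<mu> {1..n} | k \<mu>. e (Some (k, \<mu>)) \<noteq> 0})"

text \<open>Formal derivative d_i of a form (d_i y^k_mu = y^k_{mu+1_i}).\<close>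
definition ldiff :: "(nat \<Rightarrow> 'a::field \<Rightarrow> 'a) \<Rightarrow> nat \<Rightarrow> 'a lform \<Rightarrow> 'a lform" where
  "ldiff D i e = (\<lambda>x. case x of
      None \<Rightarrow> D i (e None)
    | Some (k, \<mu>) \<Rightarrow> D i (e (Some (k, \<mu>))) + (if 0 < \<mu> i then e (Some (k, \<mu>(i := \<mu> i - 1))) else 0))"

definition lspan :: "'a::field lform set \<Rightarrow> 'a lform set" where
  "lspan E = {f. \<exists>F c. finite F \<and> F \<subseteq> E \<and> f = (\<lambda>x. \<Sum>e\<in>F. c e * e x)}"

primrec prol :: "(nat \<Rightarrow> 'a::field \<Rightarrow> 'a) \<Rightarrow> nat \<Rightarrow> 'a lform set \<Rightarrow> nat \<Rightarrow> 'a lform set" where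
  "prol D n E 0 = E"
| "prol D n E (Suc r) = prol D n E r \<union> {ldiff D i e | i e. i \<in> {1..n} \<and> e \<in> prol D n E r}"

text \<open>Formal integrability of a system of order q: no prolongation produces new
equations of lower order (projection of R_{q+r+1} onto R_{q+r} is onto).\<close>
definition formally_integrable :: "(nat \<Rightarrow> 'a::field \<Rightarrow> 'a) \<Rightarrow> nat \<Rightarrow> nat \<Rightarrow> 'a lform set \<Rightarrow> bool" where
  "formally_integrable D n q E \<longleftrightarrow>
     (\<forall>r. {P \<in> lspan (prol D n E (Suc r)). ford n P \<le> q + r} \<subseteq> lspan (prol D n E r))"

definition linear_first_order_system :: "nat \<Rightarrow> nat \<Rightarrow> 'a::field lform set \<Rightarrow> bool" where
  "linear_first_order_system n m E \<longleftrightarrow> finite E \<and> (\<forall>e\<in>E. wf_form n m e \<and> ford n e \<le> 1)"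

text \<open>No zero order equations: no nonzero equation of order 0 (incl. constants) in the span.\<close>
definition no_zero_order :: "nat \<Rightarrow> 'a::field lform set \<Rightarrow> bool" where
  "no_zero_order n E \<longleftrightarrow> (\<forall>P\<in>lspan E. ford n P = 0 \<longrightarrow> P = (\<lambda>_. 0))"

text \<open>Class of an equation w.r.t. an ordering of the independent variables:
pos j is the position of x^j; the class of the jet y^k_j is pos j.\<close>
definition cls :: "nat \<Rightarrow> (nat \<Rightarrow> nat) \<Rightarrow> 'a::zero lform \<Rightarrow> nat" where
  "cls n pos e = Max (insert 0 {pos j | j k. j \<in> {1..n} \<and> e (Some (k, unitv j)) \<noteq> 0})"

text \<open>Solved form w.r.t. principal first order jets: each equation has a principal
jet y^k_j of its (maximal) class with coefficient 1, and principal jets of an equation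
do not occur in any other equation (everything else is parametric).\<close>
definition solved_form :: "nat \<Rightarrow> (nat \<Rightarrow> nat) \<Rightarrow> 'a::field lform set \<Rightarrow> bool" where
  "solved_form n pos E \<longleftrightarrow> (\<exists>pj :: 'a lform \<Rightarrow> nat \<times> nat.
     (\<forall>e\<in>E. snd (pj e) \<in> {1..n} \<and> e (Some (fst (pj e), unitv (snd (pj e)))) = 1
            \<and> pos (snd (pj e)) = cls n pos e)
   \<and> (\<forall>e\<in>E. \<forall>e'\<in>E. e' \<noteq> e \<longrightarrow> e' (Some (fst (pj e), unitv (snd (pj e)))) = 0))"

text \<open>Equations together with their prolongations w.r.t. multiplicative variables
(x^j is multiplicative for e iff pos j <= class of e).\<close>
definition mult_prol :: "(nat \<Rightarrow> 'a::field \<Rightarrow> 'a) \<Rightarrow> nat \<Rightarrow> (nat \<Rightarrow> nat) \<Rightarrow> 'a lform set \<Rightarrow> 'a lform set" where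
  "mult_prol D n pos E = E \<union> {ldiff D j e | j e. e \<in> E \<and> j \<in> {1..n} \<and> pos j \<le> cls n pos e}"

definition involutive :: "(nat \<Rightarrow> 'a::field \<Rightarrow> 'a) \<Rightarrow> nat \<Rightarrow> nat \<Rightarrow> (nat \<Rightarrow> nat) \<Rightarrow> 'a lform set \<Rightarrow> bool" where
  "involutive D n q pos E \<longleftrightarrow> solved_form n pos E \<and> formally_integrable D n q E
     \<and> lspan (prol D n E 1) = lspan (mult_prol D n pos E)"

text \<open>Symbol of a first order equation after the linear change of
independent variables with constant invertible matrix B (d_j = sum_l B j l d'_l).
Rank of the rows restricted to the columns of class >= l (jets y^k_{l'} with l' >= l).
Coordinates are delta-regular iff sum_l rank_{>= l} = sum_i i * beta^i is maximal.\<close>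
definition tsym :: "nat \<Rightarrow> (nat \<Rightarrow> nat \<Rightarrow> 'a::field) \<Rightarrow> 'a lform \<Rightarrow> nat \<times> nat \<Rightarrow> 'a" where
  "tsym n B e = (\<lambda>(k, l). \<Sum>j\<in>{1..n}. e (Some (k, unitv j)) * B j l)"

definition rows_indep :: "nat \<Rightarrow> nat \<Rightarrow> ('a lform \<Rightarrow> nat \<times> nat \<Rightarrow> 'a::field) \<Rightarrow> nat \<Rightarrow> 'a lform set \<Rightarrow> bool" where
  "rows_indep n m A l S \<longleftrightarrow> (\<forall>c. (\<forall>k\<in>{1..m}. \<forall>j\<in>{l..n}. (\<Sum>e\<in>S. c e * A e (k, j)) = 0)
       \<longrightarrow> (\<forall>e\<in>S. c e = 0))"

definition sym_rank :: "nat \<Rightarrow> nat \<Rightarrow> ('a lform \<Rightarrow> nat \<times> nat \<Rightarrow> 'a::field) \<Rightarrow> 'a lform set \<Rightarrow> nat \<Rightarrow> nat" where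
  "sym_rank n m A E l = Max {card S | S. S \<subseteq> E \<and> rows_indep n m A l S}"

definition idmat :: "nat \<Rightarrow> nat \<Rightarrow> 'a::field" where
  "idmat j l = (if j = l then 1 else 0)"

definition const_invertible :: "(nat \<Rightarrow> 'a::field \<Rightarrow> 'a) \<Rightarrow> nat \<Rightarrow> (nat \<Rightarrow> nat \<Rightarrow> 'a) \<Rightarrow> bool" where
  "const_invertible D n B \<longleftrightarrow>
     (\<forall>i\<in>{1..n}. \<forall>j\<in>{1..n}. \<forall>l\<in>{1..n}. D i (B j l) = 0)
   \<and> (\<exists>C. \<forall>j\<in>{1..n}. \<forall>l\<in>{1..n}. (\<Sum>p\<in>{1..n}. B j p * C p l) = idmat j l
                                  \<and> (\<Sum>p\<in>{1..n}. C j p * B p l) = idmat j l)"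

definition delta_regular :: "(nat \<Rightarrow> 'a::field \<Rightarrow> 'a) \<Rightarrow> nat \<Rightarrow> nat \<Rightarrow> 'a lform set \<Rightarrow> bool" where
  "delta_regular D n m E \<longleftrightarrow> (\<forall>B. const_invertible D n B \<longrightarrow>
     (\<Sum>l\<in>{1..n}. sym_rank n m (tsym n B) E l) \<le> (\<Sum>l\<in>{1..n}. sym_rank n m (tsym n idmat) E l))"

definition shift_order :: "nat \<Rightarrow> nat \<Rightarrow> nat \<Rightarrow> nat" where
  "shift_order n i j = (if j \<le> i then j + (n - i) else j - i)"

end

theory Submission
  imports Defs
begin

text \<open>Equations of class at most \<open>i\<close> contain only jets \<open>y\<^sup>k\<^sub>j\<close> with \<open>j \<le> i\<close>. After the
reordering their classes grow by \<open>n - i\<close>, so every \<open>x\<^sup>j\<close> with \<open>j > i\<close> becomes multiplicative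
for them, and the only prolongations to control are \<open>d\<^sub>j f\<close> with \<open>j \<le> i\<close>. By involution of
the whole system, such a \<open>d\<^sub>j f\<close> is a combination of equations and of their multiplicative
prolongations. Each of the latter has a leading jet with coefficient \<open>1\<close>, and the leading jets
of distinct multiplicative prolongations are strictly ordered by the weight
\<open>\<Sum> \<mu>\<^sub>q 2\<^bsup>pos q\<^esup>\<close> (a triangularity property of the solved form). Since \<open>d\<^sub>j f\<close> involves no
jet containing a derivative \<open>d\<^sub>a\<close> with \<open>a > i\<close>, looking at the heaviest leading jet shows that all
terms coming from equations of class \<open>> i\<close> cancel. The same triangularity shows that a system
in solved form whose non-multiplicative prolongations lie in the span of the multiplicative ones
is formally integrable, hence involutive.\<close>

section \<open>Derivations of forms\<close>

lemma diff_field_add: "diff_field n D \<Longrightarrow> i \<in> {1..n} \<Longrightarrow> D i (a + b) = D i a + D i b"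
  unfolding diff_field_def by blast

lemma diff_field_zero: "diff_field n D \<Longrightarrow> i \<in> {1..n} \<Longrightarrow> D i 0 = 0"
  using diff_field_add[of n D i 0 0] by (metis add_cancel_right_right add_0)

lemma diff_field_mult: "diff_field n D \<Longrightarrow> i \<in> {1..n} \<Longrightarrow> D i (a * b) = D i a * b + a * D i b"
  unfolding diff_field_def by blast

lemma diff_field_commute:
  "diff_field n D \<Longrightarrow> i \<in> {1..n} \<Longrightarrow> j \<in> {1..n} \<Longrightarrow> D i (D j a) = D j (D i a)"
  unfolding diff_field_def by blast

lemma diff_field_sum: "diff_field n D \<Longrightarrow> i \<in> {1..n} \<Longrightarrow> D i (\<Sum>x\<in>A. f x) = (\<Sum>x\<in>A. D i (f x))"
  by (induction A rule: infinite_finite_induct) (simp_all add: diff_field_zero diff_field_add)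

lemma ldiff_None [simp]: "ldiff D i e None = D i (e None)"
  by (simp add: ldiff_def)

lemma ldiff_Some [simp]: "ldiff D i e (Some (k, \<mu>)) =
   D i (e (Some (k, \<mu>))) + (if 0 < \<mu> i then e (Some (k, \<mu>(i := \<mu> i - 1))) else 0)"
  by (simp add: ldiff_def)

lemma ldiff_commute:
  assumes "diff_field n D" "i \<in> {1..n}" "j \<in> {1..n}"
  shows "ldiff D i (ldiff D j e) = ldiff D j (ldiff D i e)"
proof (rule ext)
  fix x
  have comm: "D i (D j a) = D j (D i a)" for a
    using diff_field_commute[OF assms] .
  show "ldiff D i (ldiff D j e) x = ldiff D j (ldiff D i e) x"
  proof (cases x)
    case None
    then show ?thesis by (simp add: comm)
  next
    case (Some a)
    then obtain k \<mu> where x: "x = Some (k, \<mu>)" by (cases a) auto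
    show ?thesis
    proof (cases "i = j")
      case False
      then show ?thesis unfolding x
        using diff_field_add[OF assms(1,2)] diff_field_add[OF assms(1,3)]
          diff_field_zero[OF assms(1,2)] diff_field_zero[OF assms(1,3)]
        by (cases "0 < \<mu> i"; cases "0 < \<mu> j"; simp add: comm fun_upd_twist add_ac)
    qed simp
  qed
qed

lemma ldiff_lcomb:
  assumes "diff_field n D" "t \<in> {1..n}"
  shows "ldiff D t (\<lambda>x. \<Sum>e\<in>F. c e * e x) =
         (\<lambda>x. (\<Sum>e\<in>F. D t (c e) * e x) + (\<Sum>e\<in>F. c e * ldiff D t e x))"
proof (rule ext)
  fix x
  show "ldiff D t (\<lambda>x. \<Sum>e\<in>F. c e * e x) x = (\<Sum>e\<in>F. D t (c e) * e x) + (\<Sum>e\<in>F. c e * ldiff D t e x)"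
  proof (cases x)
    case (Some a)
    then obtain k \<mu> where "x = Some (k, \<mu>)" by (cases a) auto
    then show ?thesis
      using assms by (simp add: diff_field_sum diff_field_mult sum.distrib distrib_left sum_distrib_left)
  qed (use assms in \<open>simp add: diff_field_sum diff_field_mult sum.distrib\<close>)
qed

section \<open>Linear spans\<close>

lemma lspan_base: "e \<in> E \<Longrightarrow> e \<in> lspan E"
  unfolding lspan_def by (intro CollectI exI[of _ "{e}"] exI[of _ "\<lambda>_. 1"]) auto

lemma lspan_zero: "(\<lambda>_. 0) \<in> lspan E"
  unfolding lspan_def by (intro CollectI exI[of _ "{}"]) auto

lemma lspan_add:
  assumes "a \<in> lspan E" "b \<in> lspan E"
  shows "(\<lambda>x. a x + b x) \<in> lspan E"
proof -
  obtain F1 c1 where 1: "finite F1" "F1 \<subseteq> E" "a = (\<lambda>x. \<Sum>e\<in>F1. c1 e * e x)"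
    using assms(1) unfolding lspan_def by blast
  obtain F2 c2 where 2: "finite F2" "F2 \<subseteq> E" "b = (\<lambda>x. \<Sum>e\<in>F2. c2 e * e x)"
    using assms(2) unfolding lspan_def by blast
  define c where "c e = (if e \<in> F1 then c1 e else 0) + (if e \<in> F2 then c2 e else 0)" for e
  have "(\<lambda>x. a x + b x) = (\<lambda>x. \<Sum>e\<in>F1 \<union> F2. c e * e x)"
  proof (rule ext)
    fix x
    have "(\<Sum>e\<in>F1 \<union> F2. c e * e x) = (\<Sum>e\<in>F1 \<union> F2. (if e \<in> F1 then c1 e * e x else 0))
         + (\<Sum>e\<in>F1 \<union> F2. (if e \<in> F2 then c2 e * e x else 0))"
    proof -
      have "\<And>e. c e * e x = (if e \<in> F1 then c1 e * e x else 0) + (if e \<in> F2 then c2 e * e x else 0)"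
        unfolding c_def by (simp add: distrib_right)
      then show ?thesis by (simp add: sum.distrib)
    qed
    also have "\<dots> = (\<Sum>e\<in>F1. c1 e * e x) + (\<Sum>e\<in>F2. c2 e * e x)"
      using 1 2 sum.inter_restrict[of "F1 \<union> F2" "\<lambda>e. c1 e * e x" F1]
         sum.inter_restrict[of "F1 \<union> F2" "\<lambda>e. c2 e * e x" F2]
      by (simp add: Int_absorb1 Int_absorb2)
    finally show "a x + b x = (\<Sum>e\<in>F1 \<union> F2. c e * e x)" using 1 2 by simp
  qed
  then show ?thesis unfolding lspan_def using 1 2 by blast
qed

lemma lspan_smult:
  assumes "a \<in> lspan E"
  shows "(\<lambda>x. k * a x) \<in> lspan E"
proof -
  obtain F c where F: "finite F" "F \<subseteq> E" "a = (\<lambda>x. \<Sum>e\<in>F. c e * e x)"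
    using assms unfolding lspan_def by blast
  then have "(\<lambda>x. k * a x) = (\<lambda>x. \<Sum>e\<in>F. (k * c e) * e x)"
    by (simp add: sum_distrib_left mult.assoc)
  then show ?thesis unfolding lspan_def using F by (intro CollectI exI[of _ F] exI[of _ "\<lambda>e. k * c e"]) simp
qed

lemma lspan_sum:
  assumes "finite G" "\<And>g. g \<in> G \<Longrightarrow> v g \<in> lspan E"
  shows "(\<lambda>x. \<Sum>g\<in>G. w g * v g x) \<in> lspan E"
  using assms
proof (induction G rule: finite_induct)
  case empty
  then show ?case using lspan_zero by simp
next
  case (insert g G)
  then show ?case using lspan_add[OF lspan_smult[of "v g" E "w g"] insert.IH] by simp
qed

lemma lspan_mono: "E \<subseteq> E' \<Longrightarrow> lspan E \<subseteq> lspan E'"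
proof
  fix P assume "E \<subseteq> E'" "P \<in> lspan E"
  then obtain F c where "finite F" "F \<subseteq> E" "P = (\<lambda>x. \<Sum>e\<in>F. c e * e x)"
    unfolding lspan_def by auto
  then show "P \<in> lspan E'" unfolding lspan_def using \<open>E \<subseteq> E'\<close> by auto
qed

lemma lspan_subset_lspanI:
  assumes "E \<subseteq> lspan G"
  shows "lspan E \<subseteq> lspan G"
proof
  fix P assume "P \<in> lspan E"
  then obtain F c where F: "finite F" "F \<subseteq> E" "P = (\<lambda>x. \<Sum>e\<in>F. c e * e x)"
    unfolding lspan_def by blast
  then show "P \<in> lspan G" using lspan_sum[OF F(1), of "\<lambda>e. e" G c] assms by auto
qed

lemma lspan_if_nonzero_coeffs:
  assumes "finite F" "P = (\<lambda>x. \<Sum>e\<in>F. c e * e x)" "\<And>e. e \<in> F \<Longrightarrow> c e \<noteq> 0 \<Longrightarrow> e \<in> G"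
  shows "P \<in> lspan G"
proof -
  let ?F = "{e\<in>F. c e \<noteq> 0}"
  have "P = (\<lambda>x. \<Sum>e\<in>?F. c e * e x)"
    unfolding assms(2) by (rule ext, rule sum.mono_neutral_right) (use assms in auto)
  moreover have "finite ?F" "?F \<subseteq> G" using assms by auto
  ultimately show ?thesis unfolding lspan_def by blast
qed

lemma ldiff_in_lspan:
  assumes "diff_field n D" "t \<in> {1..n}" "P \<in> lspan E" "E \<subseteq> lspan G"
    and "\<And>e. e \<in> E \<Longrightarrow> ldiff D t e \<in> lspan G"
  shows "ldiff D t P \<in> lspan G"
proof -
  obtain F c where F: "finite F" "F \<subseteq> E" "P = (\<lambda>x. \<Sum>e\<in>F. c e * e x)"
    using assms(3) unfolding lspan_def by blast
  have "(\<lambda>x. \<Sum>e\<in>F. D t (c e) * e x) \<in> lspan G"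
    using lspan_sum[OF F(1), of "\<lambda>e. e" G "\<lambda>e. D t (c e)"] F(2) assms(4) by auto
  moreover have "(\<lambda>x. \<Sum>e\<in>F. c e * ldiff D t e x) \<in> lspan G"
    using lspan_sum[OF F(1), of "ldiff D t" G c] F(2) assms(5) by auto
  ultimately show ?thesis unfolding F(3) ldiff_lcomb[OF assms(1,2)] by (rule lspan_add)
qed

lemma lcomb_eval_single:
  assumes "finite F" "x0 \<in> F" "\<And>x. x \<in> F - {x0} \<Longrightarrow> c x * x J = 0"
  shows "(\<Sum>x\<in>F. c x * x J) = c x0 * x0 J"
proof -
  have "(\<Sum>x\<in>F - {x0}. c x * x J) = 0"
    using assms(3) by (rule sum.neutral[rule_format])
  then show ?thesis using sum.remove[OF assms(1,2), of "\<lambda>x. c x * x J"] by simp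
qed

section \<open>Multi-indices and iterated derivatives\<close>

definition fsupp :: "'a::zero lform \<Rightarrow> bool" where
  "fsupp e \<longleftrightarrow> finite {x. e x \<noteq> 0}"

definition deg :: "nat \<Rightarrow> (nat \<Rightarrow> nat) \<Rightarrow> nat" where
  "deg n \<mu> = sum \<mu> {1..n}"

definition ldiffs :: "(nat \<Rightarrow> 'a::field \<Rightarrow> 'a) \<Rightarrow> nat list \<Rightarrow> 'a lform \<Rightarrow> 'a lform" where
  "ldiffs D js e = foldr (ldiff D) js e"

definition mindex :: "nat list \<Rightarrow> nat \<Rightarrow> nat" where
  "mindex js = count_list js"

definition mplus :: "(nat \<Rightarrow> nat) \<Rightarrow> (nat \<Rightarrow> nat) \<Rightarrow> nat \<Rightarrow> nat" where
  "mplus \<mu> \<nu> = (\<lambda>l. \<mu> l + \<nu> l)"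

text \<open>Moving one unit of a multi-index to a variable of higher rank \<open>pos\<close> increases this weight,
which is all that is used of it.\<close>
definition mweight :: "nat \<Rightarrow> (nat \<Rightarrow> nat) \<Rightarrow> (nat \<Rightarrow> nat) \<Rightarrow> nat" where
  "mweight n pos \<mu> = (\<Sum>q\<in>{1..n}. \<mu> q * 2 ^ pos q)"

lemma ldiffs_Nil [simp]: "ldiffs D [] e = e"
  by (simp add: ldiffs_def)

lemma ldiffs_Cons [simp]: "ldiffs D (t # js) e = ldiff D t (ldiffs D js e)"
  by (simp add: ldiffs_def)

lemma fsupp_ldiff:
  assumes "diff_field n D" "t \<in> {1..n}" "fsupp e"
  shows "fsupp (ldiff D t e)"
proof -
  let ?S = "{x. e x \<noteq> 0}"
  let ?raise = "map_option (\<lambda>(k::nat, \<mu>::nat\<Rightarrow>nat). (k, \<mu>(t := \<mu> t + 1)))"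
  have "{x. ldiff D t e x \<noteq> 0} \<subseteq> insert None (?S \<union> ?raise ` ?S)"
  proof
    fix x assume x: "x \<in> {x. ldiff D t e x \<noteq> 0}"
    show "x \<in> insert None (?S \<union> ?raise ` ?S)"
    proof (cases x)
      case (Some a)
      then obtain k \<mu> where xs: "x = Some (k, \<mu>)" by (cases a) auto
      show ?thesis
      proof (cases "e (Some (k, \<mu>)) = 0")
        case True
        then have "0 < \<mu> t \<and> e (Some (k, \<mu>(t := \<mu> t - 1))) \<noteq> 0"
          using x xs diff_field_zero[OF assms(1,2)] by (auto split: if_splits)
        moreover from this have "x = ?raise (Some (k, \<mu>(t := \<mu> t - 1)))" using xs by auto
        ultimately show ?thesis by blast
      qed (use xs in auto)
    qed simp
  qed
  moreover have "finite (insert None (?S \<union> ?raise ` ?S))"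
    using assms(3) unfolding fsupp_def by simp
  ultimately show ?thesis unfolding fsupp_def by (rule finite_subset)
qed

lemma fsupp_lcomb:
  fixes c :: "'a::field lform \<Rightarrow> 'a"
  assumes "finite F" "\<And>e. e \<in> F \<Longrightarrow> fsupp e"
  shows "fsupp (\<lambda>x. \<Sum>e\<in>F. c e * e x)"
proof -
  have "{x. (\<Sum>e\<in>F. c e * e x) \<noteq> 0} \<subseteq> (\<Union>e\<in>F. {x. e x \<noteq> 0})"
  proof
    fix x assume "x \<in> {x. (\<Sum>e\<in>F. c e * e x) \<noteq> 0}"
    then have "(\<Sum>e\<in>F. c e * e x) \<noteq> 0" by simp
    then obtain e where "e \<in> F" "c e * e x \<noteq> 0" by (meson sum.neutral)
    then show "x \<in> (\<Union>e\<in>F. {x. e x \<noteq> 0})" by auto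
  qed
  moreover have "finite (\<Union>e\<in>F. {x. e x \<noteq> 0})" using assms unfolding fsupp_def by auto
  ultimately show ?thesis unfolding fsupp_def by (rule finite_subset)
qed

lemma fsupp_ldiffs:
  assumes "diff_field n D" "set js \<subseteq> {1..n}" "fsupp e"
  shows "fsupp (ldiffs D js e)"
  using assms(2) by (induction js) (auto intro: fsupp_ldiff[OF assms(1)] simp: assms(3))

lemma wf_form_fsupp: "wf_form n m e \<Longrightarrow> fsupp e"
  by (simp add: wf_form_def fsupp_def)

lemma wf_form_jet_var:
  assumes "wf_form n m e" "e (Some (k, unitv j)) \<noteq> 0"
  shows "j \<in> {1..n}"
proof (rule ccontr)
  assume "j \<notin> {1..n}"
  then have "unitv j j = 0" using assms unfolding wf_form_def by blast
  then show False unfolding unitv_def by simp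
qed

lemma deg_le_ford:
  assumes "fsupp P" "P (Some (k, \<mu>)) \<noteq> 0"
  shows "deg n \<mu> \<le> ford n P"
proof -
  let ?S = "{sum \<mu> {1..n} | k \<mu>. P (Some (k, \<mu>)) \<noteq> 0}"
  let ?d = "\<lambda>x. case x of None \<Rightarrow> 0 | Some (k::nat, \<mu>) \<Rightarrow> sum \<mu> {1..n}"
  have "?S \<subseteq> ?d ` {x. P x \<noteq> 0}"
  proof
    fix v assume "v \<in> ?S"
    then obtain k \<mu> where "v = sum \<mu> {1..n}" "P (Some (k, \<mu>)) \<noteq> 0" by blast
    then show "v \<in> ?d ` {x. P x \<noteq> 0}" by (intro image_eqI[of _ _ "Some (k, \<mu>)"]) auto
  qed
  then have "finite ?S" using assms(1) unfolding fsupp_def by (meson finite_imageI finite_subset)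
  moreover have "sum \<mu> {1..n} \<in> ?S" using assms(2) by blast
  ultimately show ?thesis unfolding ford_def deg_def by (simp add: Max_ge)
qed

lemma ldiffs_move_to_front:
  assumes "diff_field n D" "set ys1 \<subseteq> {1..n}" "a \<in> {1..n}"
  shows "ldiffs D (ys1 @ a # ys2) g = ldiff D a (ldiffs D (ys1 @ ys2) g)"
  using assms(2)
proof (induction ys1)
  case (Cons b ys1)
  then show ?case using ldiff_commute[OF assms(1), of b a] assms(3) by simp
qed simp

lemma mindex_Cons: "mindex (t # js) = (\<lambda>l. if t = l then mindex js l + 1 else mindex js l)"
  by (simp add: mindex_def fun_eq_iff)

lemma ldiffs_perm:
  assumes "diff_field n D" "mindex xs = mindex ys" "set xs \<subseteq> {1..n}"
  shows "ldiffs D xs g = ldiffs D ys g"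
  using assms(2,3)
proof (induction xs arbitrary: ys)
  case Nil
  then show ?case by (simp add: mindex_def fun_eq_iff count_list_0_iff)
next
  case (Cons a xs)
  have count: "count_list ys x = count_list (a # xs) x" for x
    using fun_cong[OF Cons.prems(1), of x] by (simp add: mindex_def)
  have sets: "x \<in> set ys \<longleftrightarrow> x \<in> set (a # xs)" for x
    using count_list_0_iff[of ys x] count_list_0_iff[of "a # xs" x] count[of x] by argo
  then have "a \<in> set ys" by simp
  then obtain ys1 ys2 where ys: "ys = ys1 @ a # ys2" by (meson split_list)
  have "mindex xs = mindex (ys1 @ ys2)"
  proof
    fix l
    show "mindex xs l = mindex (ys1 @ ys2) l"
      using count[of l] unfolding ys mindex_def by (auto split: if_splits)
  qed
  then have "ldiffs D xs g = ldiffs D (ys1 @ ys2) g" using Cons by simp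
  moreover have "set ys1 \<subseteq> set (a # xs)" using sets unfolding ys by auto
  then have "set ys1 \<subseteq> {1..n}" using Cons.prems(2) by auto
  ultimately show ?case using ldiffs_move_to_front[OF assms(1)] ys Cons.prems(2) by simp
qed

lemma deg_mindex: "set js \<subseteq> {1..n} \<Longrightarrow> deg n (mindex js) = length js"
  unfolding deg_def mindex_def using sum_count_set[of js "{1..n}"] by simp

lemma deg_unitv: "b \<in> {1..n} \<Longrightarrow> deg n (unitv b) = 1"
  unfolding deg_def unitv_def by simp

lemma deg_mplus: "deg n (mplus \<mu> \<nu>) = deg n \<mu> + deg n \<nu>"
  unfolding deg_def mplus_def by (simp add: sum.distrib)

lemma deg_minus: "\<nu> \<le> \<mu> \<Longrightarrow> deg n (\<mu> - \<nu>) = deg n \<mu> - deg n \<nu>"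
  unfolding deg_def by (simp add: sum_subtractf_nat le_fun_def)

lemma deg_decrement:
  assumes "t \<in> {1..n}" "0 < \<mu> t"
  shows "deg n (\<mu>(t := \<mu> t - 1)) = deg n \<mu> - 1"
proof -
  have "deg n \<mu> = \<mu> t + sum \<mu> ({1..n} - {t})"
    unfolding deg_def using sum.remove[OF _ assms(1)] by simp
  moreover have "deg n (\<mu>(t := \<mu> t - 1)) = (\<mu> t - 1) + sum \<mu> ({1..n} - {t})"
    unfolding deg_def using sum.remove[OF _ assms(1), of "\<mu>(t := \<mu> t - 1)"] by simp
  ultimately show ?thesis using assms(2) by simp
qed

lemma deg_eq_1_unitv:
  assumes "wf_form n m g" "g (Some (k, \<nu>)) \<noteq> 0" "deg n \<nu> = 1"
  shows "\<exists>b\<in>{1..n}. \<nu> = unitv b"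
proof -
  have outside: "\<nu> l = 0" if "l \<notin> {1..n}" for l
    using assms(1,2) that unfolding wf_form_def by blast
  obtain b where b: "b \<in> {1..n}" "0 < \<nu> b"
  proof (rule ccontr)
    assume "\<not> thesis"
    then have "\<forall>l\<in>{1..n}. \<nu> l = 0" using that by (meson gr0I)
    then have "deg n \<nu> = 0" unfolding deg_def by simp
    then show False using assms(3) by simp
  qed
  have split: "deg n \<nu> = \<nu> b + sum \<nu> ({1..n} - {b})"
    unfolding deg_def using sum.remove[OF _ b(1)] by simp
  then have "\<nu> b = 1" "sum \<nu> ({1..n} - {b}) = 0" using assms(3) b(2) by linarith+
  then have "\<nu> l = unitv b l" for l
    using outside[of l] unfolding unitv_def by (cases "l = b"; cases "l \<in> {1..n}") auto
  then show ?thesis using b(1) by blast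
qed

lemma first_order_coeff_beyond:
  assumes "wf_form n m g" "ford n g \<le> 1" "1 < deg n \<nu>"
  shows "g (Some (k, \<nu>)) = 0"
  using deg_le_ford[OF wf_form_fsupp[OF assms(1)], of k \<nu> n] assms(2,3) by linarith

text \<open>On a first order form, \<open>d\<^sub>j\<^sub>1 \<dots> d\<^sub>j\<^sub>s\<close> acts on the jets of order \<open>s + 1\<close> as a pure shift
of multi-indices: the coefficients of the form itself are not differentiated there.\<close>
lemma ldiffs_coeff_top:
  assumes df: "diff_field n D" and js: "set js \<subseteq> {1..n}" and g: "wf_form n m g" "ford n g \<le> 1"
    and "Suc (length js) \<le> deg n \<mu>"
  shows "ldiffs D js g (Some (k, \<mu>)) = (if mindex js \<le> \<mu> then g (Some (k, \<mu> - mindex js)) else 0)"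
  using js assms(5)
proof (induction js arbitrary: \<mu>)
  case Nil
  then show ?case by (simp add: le_fun_def fun_diff_def mindex_def)
next
  case (Cons t js)
  have t: "t \<in> {1..n}" and js: "set js \<subseteq> {1..n}" using Cons.prems by auto
  have beyond: "ldiffs D js g (Some (k, \<mu>)) = 0"
  proof (cases "mindex js \<le> \<mu>")
    case True
    then have "1 < deg n (\<mu> - mindex js)"
      using deg_minus[OF True] deg_mindex[OF js] Cons.prems(2) by simp
    then have "g (Some (k, \<mu> - mindex js)) = 0" by (rule first_order_coeff_beyond[OF g])
    then show ?thesis using Cons.IH[OF js] Cons.prems(2) True by simp
  qed (use Cons.IH[OF js] Cons.prems(2) in simp)
  show ?case
  proof (cases "0 < \<mu> t")
    case True
    let ?\<mu>' = "\<mu>(t := \<mu> t - 1)"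
    have "Suc (length js) \<le> deg n ?\<mu>'" using deg_decrement[of t n \<mu>, OF t True] Cons.prems(2) by simp
    note IH = Cons.IH[OF js this]
    have le: "(mindex js \<le> ?\<mu>') = (mindex (t # js) \<le> \<mu>)"
      unfolding le_fun_def mindex_Cons
    proof (intro iffI allI)
      fix l
      assume "\<forall>l. mindex js l \<le> ?\<mu>' l"
      then show "(if t = l then mindex js l + 1 else mindex js l) \<le> \<mu> l"
        using True by (cases "t = l") (auto dest: spec[of _ l])
    next
      fix l
      assume "\<forall>l. (if t = l then mindex js l + 1 else mindex js l) \<le> \<mu> l"
      then show "mindex js l \<le> ?\<mu>' l" by (cases "t = l") (auto dest: spec[of _ l])
    qed
    have shift: "?\<mu>' - mindex js = \<mu> - mindex (t # js)"
      by (rule ext) (simp add: mindex_Cons)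
    have "ldiffs D (t # js) g (Some (k, \<mu>)) = ldiffs D js g (Some (k, ?\<mu>'))"
      using True beyond diff_field_zero[OF df t] by simp
    also have "\<dots> = (if mindex (t # js) \<le> \<mu> then g (Some (k, \<mu> - mindex (t # js))) else 0)"
      unfolding IH by (simp only: le shift)
    finally show ?thesis .
  next
    case False
    then have "\<not> mindex (t # js) \<le> \<mu>" unfolding le_fun_def mindex_Cons by (auto dest: spec[of _ t])
    then show ?thesis using False beyond diff_field_zero[OF df t] by simp
  qed
qed

lemma ldiffs_coeff_beyond_top:
  assumes "diff_field n D" "set js \<subseteq> {1..n}" "wf_form n m g" "ford n g \<le> 1"
    and "Suc (length js) < deg n \<mu>"
  shows "ldiffs D js g (Some (k, \<mu>)) = 0"
proof (cases "mindex js \<le> \<mu>")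
  case True
  then have "1 < deg n (\<mu> - mindex js)"
    using deg_minus[OF True] deg_mindex[OF assms(2)] assms(5) by simp
  then have "g (Some (k, \<mu> - mindex js)) = 0" by (rule first_order_coeff_beyond[OF assms(3,4)])
  then show ?thesis using ldiffs_coeff_top[OF assms(1-4)] assms(5) True by simp
qed (use ldiffs_coeff_top[OF assms(1-4)] assms(5) in simp)

lemma ldiffs_coeff_shifted_jet:
  assumes "diff_field n D" "set js \<subseteq> {1..n}" "wf_form n m g" "ford n g \<le> 1" "a \<in> {1..n}"
  shows "ldiffs D js g (Some (k, mplus (mindex js) (unitv a))) = g (Some (k, unitv a))"
proof -
  have "deg n (mplus (mindex js) (unitv a)) = Suc (length js)"
    using deg_mplus deg_mindex[OF assms(2)] deg_unitv[OF assms(5)] by simp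
  moreover have "mindex js \<le> mplus (mindex js) (unitv a)" by (simp add: le_fun_def mplus_def)
  moreover have "mplus (mindex js) (unitv a) - mindex js = unitv a" by (simp add: fun_eq_iff mplus_def)
  ultimately show ?thesis using ldiffs_coeff_top[OF assms(1-4)] by simp
qed

lemma ldiffs_coeff_top_nonzero:
  assumes "diff_field n D" "set js \<subseteq> {1..n}" "wf_form n m g" "ford n g \<le> 1"
    and "deg n \<mu> = Suc (length js)" "ldiffs D js g (Some (k, \<mu>)) \<noteq> 0"
  obtains b where "b \<in> {1..n}" "\<mu> = mplus (mindex js) (unitv b)" "g (Some (k, unitv b)) \<noteq> 0"
proof -
  have le: "mindex js \<le> \<mu>" and nz: "g (Some (k, \<mu> - mindex js)) \<noteq> 0"
    using ldiffs_coeff_top[OF assms(1-4)] assms(5,6) by (auto split: if_splits)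
  have "deg n (\<mu> - mindex js) = 1" using deg_minus[OF le] deg_mindex[OF assms(2)] assms(5) by simp
  then obtain b where b: "b \<in> {1..n}" "\<mu> - mindex js = unitv b"
    using deg_eq_1_unitv[OF assms(3) nz] by blast
  have "\<mu> = mplus (mindex js) (unitv b)"
  proof
    fix l
    have "mindex js l \<le> \<mu> l" using le unfolding le_fun_def by blast
    then show "\<mu> l = mplus (mindex js) (unitv b) l"
      using fun_cong[OF b(2), of l] unfolding mplus_def by simp
  qed
  with b nz show ?thesis using that by simp
qed

lemma mweight_mplus: "mweight n pos (mplus \<mu> \<nu>) = mweight n pos \<mu> + mweight n pos \<nu>"
  unfolding mweight_def mplus_def by (simp add: sum.distrib distrib_right)

lemma mweight_unitv: "b \<in> {1..n} \<Longrightarrow> mweight n pos (unitv b) = 2 ^ pos b"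
proof -
  have "(if q = b then 1 else 0) * (2::nat) ^ pos q = (if q = b then 2 ^ pos q else 0)" for q
    by simp
  then show "b \<in> {1..n} \<Longrightarrow> ?thesis" unfolding mweight_def unitv_def by simp
qed

lemma jet_var_le_cls:
  assumes "wf_form n m e" "e (Some (k, unitv j)) \<noteq> 0"
  shows "pos j \<le> cls n pos e"
proof -
  let ?S = "{pos j | j k. j \<in> {1..n} \<and> e (Some (k, unitv j)) \<noteq> 0}"
  have "finite ?S" by (rule finite_subset[of _ "pos ` {1..n}"]) auto
  moreover have "pos j \<in> ?S" using assms wf_form_jet_var by blast
  ultimately show ?thesis unfolding cls_def by (simp add: Max_ge)
qed

section \<open>Systems in solved form\<close>

text \<open>A linear first order system in solved form for the ranking \<open>pos\<close> of the independent
variables; \<open>pj e = (k, a)\<close> names the principal jet \<open>y\<^sup>k\<^sub>a\<close> of the equation \<open>e\<close>.\<close>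
locale solved_system =
  fixes D :: "nat \<Rightarrow> 'a::field \<Rightarrow> 'a" and n m :: nat and pos :: "nat \<Rightarrow> nat"
    and E :: "'a lform set" and pj :: "'a lform \<Rightarrow> nat \<times> nat"
  assumes diff_field: "diff_field n D"
    and wf_form: "\<And>e. e \<in> E \<Longrightarrow> wf_form n m e"
    and first_order: "\<And>e. e \<in> E \<Longrightarrow> ford n e \<le> 1"
    and inj_pos: "inj_on pos {1..n}"
    and principal_var: "\<And>e. e \<in> E \<Longrightarrow> snd (pj e) \<in> {1..n}"
    and principal_coeff: "\<And>e. e \<in> E \<Longrightarrow> e (Some (fst (pj e), unitv (snd (pj e)))) = 1"
    and principal_cls: "\<And>e. e \<in> E \<Longrightarrow> pos (snd (pj e)) = cls n pos e"
    and principal_unique: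
      "\<And>e e'. e \<in> E \<Longrightarrow> e' \<in> E \<Longrightarrow> e' \<noteq> e \<Longrightarrow> e' (Some (fst (pj e), unitv (snd (pj e)))) = 0"
begin

definition multiplicative :: "'a lform \<Rightarrow> nat \<Rightarrow> bool" where
  "multiplicative e j \<longleftrightarrow> j \<in> {1..n} \<and> pos j \<le> cls n pos e"

definition mprol :: "nat \<Rightarrow> 'a lform set" where
  "mprol s = {ldiffs D js e | e js. e \<in> E \<and> length js \<le> s \<and> (\<forall>j\<in>set js. multiplicative e j)}"

definition lead_jet :: "'a lform \<Rightarrow> nat list \<Rightarrow> nat \<times> (nat \<Rightarrow> nat)" where
  "lead_jet e js = (fst (pj e), mplus (mindex js) (unitv (snd (pj e))))"

lemma mprolI: "e \<in> E \<Longrightarrow> length js \<le> s \<Longrightarrow> \<forall>j\<in>set js. multiplicative e j \<Longrightarrow> ldiffs D js e \<in> mprol s"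
  unfolding mprol_def by blast

lemma mprolE:
  assumes "x \<in> mprol s"
  obtains e js where "e \<in> E" "length js \<le> s" "\<forall>j\<in>set js. multiplicative e j" "x = ldiffs D js e"
  using assms unfolding mprol_def by blast

lemma multiplicative_vars: "\<forall>j\<in>set js. multiplicative e j \<Longrightarrow> set js \<subseteq> {1..n}"
  unfolding multiplicative_def by auto

lemma mprol_mono: "s \<le> s' \<Longrightarrow> mprol s \<subseteq> mprol s'"
  by (auto elim!: mprolE intro!: mprolI)

lemma mprol_subset_lspan_Suc: "mprol s \<subseteq> lspan (mprol (Suc s))"
  using mprol_mono[of s "Suc s"] lspan_base by (meson le_SucI order_refl subset_iff)

lemma equation_in_mprol: "e \<in> E \<Longrightarrow> e \<in> mprol s"
  using mprolI[of e "[]" s] by simp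

lemma fsupp_mprol: "x \<in> mprol s \<Longrightarrow> fsupp x"
  by (elim mprolE) (use fsupp_ldiffs[OF diff_field multiplicative_vars wf_form_fsupp[OF wf_form]] in simp)

lemma prol_mono: "r \<le> r' \<Longrightarrow> prol D n E r \<subseteq> prol D n E r'"
  by (induction r' rule: dec_induct) auto

lemma ldiffs_in_prol: "e \<in> E \<Longrightarrow> set js \<subseteq> {1..n} \<Longrightarrow> ldiffs D js e \<in> prol D n E (length js)"
  by (induction js) auto

lemma mprol_subset_prol: "mprol s \<subseteq> prol D n E s"
proof
  fix x assume "x \<in> mprol s"
  then obtain e js where "e \<in> E" "length js \<le> s" "\<forall>j\<in>set js. multiplicative e j" "x = ldiffs D js e"
    by (rule mprolE)
  then show "x \<in> prol D n E s" using ldiffs_in_prol[of e js] multiplicative_vars prol_mono by blast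
qed

lemma mprol_1: "mprol 1 = mult_prol D n pos E"
proof
  show "mprol 1 \<subseteq> mult_prol D n pos E"
  proof
    fix x assume "x \<in> mprol 1"
    then obtain e js where e: "e \<in> E" "length js \<le> 1" "\<forall>j\<in>set js. multiplicative e j" "x = ldiffs D js e"
      by (rule mprolE)
    then consider "js = []" | j where "js = [j]" by (cases js) auto
    then show "x \<in> mult_prol D n pos E"
      by cases (use e in \<open>auto simp: mult_prol_def multiplicative_def\<close>)
  qed
  show "mult_prol D n pos E \<subseteq> mprol 1"
  proof
    fix x assume "x \<in> mult_prol D n pos E"
    then consider "x \<in> E" | j e where "e \<in> E" "j \<in> {1..n}" "pos j \<le> cls n pos e" "x = ldiff D j e"
      unfolding mult_prol_def by blast
    then show "x \<in> mprol 1"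
      by cases (use equation_in_mprol mprolI[of _ "[_]" 1] in \<open>auto simp: multiplicative_def\<close>)
  qed
qed

text \<open>The induction is on the rank \<open>pos j\<close>: a non-multiplicative \<open>d\<^sub>j\<close> is commuted past the last
multiplicative derivative \<open>d\<^sub>t\<close> of \<open>h\<close>, whose rank is smaller.\<close>
lemma ldiff_mprol_Suc_in_lspan:
  assumes IH: "\<And>h j. h \<in> mprol s \<Longrightarrow> j \<in> {1..n} \<Longrightarrow> ldiff D j h \<in> lspan (mprol (Suc s))"
    and "h \<in> mprol (Suc s)" "j \<in> {1..n}"
  shows "ldiff D j h \<in> lspan (mprol (Suc (Suc s)))"
  using assms(2,3)
proof (induction "pos j" arbitrary: h j rule: less_induct)
  case less
  obtain f js where f: "f \<in> E" "length js \<le> Suc s" "\<forall>t\<in>set js. multiplicative f t" "h = ldiffs D js f"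
    using less.prems(1) by (rule mprolE)
  show ?case
  proof (cases "length js \<le> s")
    case True
    then have "ldiff D j h \<in> lspan (mprol (Suc s))" using IH[OF mprolI] f less.prems(2) by simp
    then show ?thesis using lspan_mono[OF mprol_mono[of "Suc s" "Suc (Suc s)"]] by auto
  next
    case long: False
    show ?thesis
    proof (cases "multiplicative f j")
      case True
      then have "ldiff D j h \<in> mprol (Suc (Suc s))" using mprolI[of f "j # js"] f by simp
      then show ?thesis by (rule lspan_base)
    next
      case False
      obtain t js' where js: "js = t # js'" using long by (cases js) auto
      have t: "t \<in> {1..n}" "pos t < pos j"
        using f(3) False less.prems(2) unfolding js multiplicative_def by auto
      have "ldiff D j (ldiffs D js' f) \<in> lspan (mprol (Suc s))"
        using IH[OF mprolI less.prems(2)] f js by simp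
      then have "ldiff D t (ldiff D j (ldiffs D js' f)) \<in> lspan (mprol (Suc (Suc s)))"
        by (rule ldiff_in_lspan[OF diff_field t(1) _ mprol_subset_lspan_Suc])
          (use less.hyps[OF t(2)] t(1) in blast)
      then show ?thesis unfolding f(4) js ldiffs_Cons ldiff_commute[OF diff_field less.prems(2) t(1)] .
    qed
  qed
qed

lemma ldiff_mprol_in_lspan:
  assumes local: "\<And>f j. f \<in> E \<Longrightarrow> j \<in> {1..n} \<Longrightarrow> ldiff D j f \<in> lspan (mult_prol D n pos E)"
  shows "h \<in> mprol s \<Longrightarrow> j \<in> {1..n} \<Longrightarrow> ldiff D j h \<in> lspan (mprol (Suc s))"
proof (induction s arbitrary: h j)
  case 0
  then obtain e where "e \<in> E" "h = e" by (auto elim: mprolE)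
  then show ?case using local[of e j] 0(2) mprol_1 by simp
next
  case (Suc s)
  then show ?case by (rule ldiff_mprol_Suc_in_lspan)
qed

lemma prol_subset_lspan_mprol:
  assumes local: "\<And>f j. f \<in> E \<Longrightarrow> j \<in> {1..n} \<Longrightarrow> ldiff D j f \<in> lspan (mult_prol D n pos E)"
  shows "prol D n E r \<subseteq> lspan (mprol r)"
proof (induction r)
  case 0
  then show ?case using equation_in_mprol lspan_base by fastforce
next
  case (Suc r)
  show ?case
  proof
    fix x assume "x \<in> prol D n E (Suc r)"
    then consider "x \<in> prol D n E r" | i e where "i \<in> {1..n}" "e \<in> prol D n E r" "x = ldiff D i e"
      by auto
    then show "x \<in> lspan (mprol (Suc r))"
    proof cases
      case 1
      then show ?thesis using Suc lspan_mono[OF mprol_mono[of r "Suc r"]] by auto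
    next
      case 2
      have "e \<in> lspan (mprol r)" using 2(2) Suc by blast
      then show ?thesis unfolding 2(3)
        by (rule ldiff_in_lspan[OF diff_field 2(1) _ mprol_subset_lspan_Suc])
          (use ldiff_mprol_in_lspan[OF local] 2(1) in blast)
    qed
  qed
qed

lemma deg_lead_jet:
  "e \<in> E \<Longrightarrow> \<forall>j\<in>set js. multiplicative e j \<Longrightarrow> deg n (snd (lead_jet e js)) = Suc (length js)"
  unfolding lead_jet_def
  using deg_mplus deg_mindex[OF multiplicative_vars] deg_unitv[OF principal_var] by simp

lemma ldiffs_lead_jet:
  "e \<in> E \<Longrightarrow> \<forall>j\<in>set js. multiplicative e j \<Longrightarrow> ldiffs D js e (Some (lead_jet e js)) = 1"
  unfolding lead_jet_def using principal_coeff
  by (simp add: ldiffs_coeff_shifted_jet[OF diff_field multiplicative_vars wf_form first_order principal_var])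

lemma lead_jet_dominates:
  assumes g: "g \<in> E" and g': "g' \<in> E"
    and mult: "\<forall>j\<in>set js. multiplicative g j" and mult': "\<forall>j\<in>set js'. multiplicative g' j"
    and len: "length js' = length js"
    and nz: "ldiffs D js' g' (Some (lead_jet g js)) \<noteq> 0"
  shows "mweight n pos (snd (lead_jet g js)) < mweight n pos (snd (lead_jet g' js'))
         \<or> (g' = g \<and> mindex js' = mindex js)"
proof -
  obtain k a where pg: "pj g = (k, a)" by fastforce
  obtain k' a' where pg': "pj g' = (k', a')" by fastforce
  have a: "a \<in> {1..n}" "pos a = cls n pos g" using principal_var[OF g] principal_cls[OF g] pg by auto
  have a': "a' \<in> {1..n}" "pos a' = cls n pos g'" using principal_var[OF g'] principal_cls[OF g'] pg' by auto
  let ?\<mu> = "mplus (mindex js) (unitv a)"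
  have "deg n ?\<mu> = Suc (length js')"
    using deg_lead_jet[OF g mult] len unfolding lead_jet_def pg by simp
  moreover have "ldiffs D js' g' (Some (k, ?\<mu>)) \<noteq> 0" using nz unfolding lead_jet_def pg by simp
  ultimately obtain b where b: "b \<in> {1..n}" "?\<mu> = mplus (mindex js') (unitv b)" "g' (Some (k, unitv b)) \<noteq> 0"
    by (rule ldiffs_coeff_top_nonzero[OF diff_field multiplicative_vars[OF mult'] wf_form[OF g'] first_order[OF g']])
  have "pos b \<le> pos a'" using jet_var_le_cls[OF wf_form[OF g'] b(3)] a'(2) by simp
  show ?thesis
  proof (cases "b = a'")
    case False
    then have "pos b < pos a'" using \<open>pos b \<le> pos a'\<close> inj_pos b(1) a'(1) unfolding inj_on_def by fastforce
    then have "mweight n pos ?\<mu> < mweight n pos (mplus (mindex js') (unitv a'))"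
      unfolding b(2) mweight_mplus mweight_unitv[OF b(1)] mweight_unitv[OF a'(1)] by simp
    then show ?thesis unfolding lead_jet_def pg pg' by simp
  next
    case True
    have same: "mindex js l + unitv a l = mindex js' l + unitv a' l" for l
      using fun_cong[OF b(2), of l] True unfolding mplus_def by simp
    text \<open>If the principal variables differed, each would be multiplicative for the other equation.\<close>
    have "a = a'"
    proof (rule ccontr)
      assume ne: "a \<noteq> a'"
      then have "mindex js a' \<noteq> 0" "mindex js' a \<noteq> 0"
        using same[of a'] same[of a] unfolding unitv_def by auto
      then have "a' \<in> set js" "a \<in> set js'" unfolding mindex_def by (simp_all add: count_list_0_iff)
      then have "pos a' \<le> pos a" "pos a \<le> pos a'"
        using mult mult' a(2) a'(2) unfolding multiplicative_def by auto
      then show False using inj_pos a(1) a'(1) ne unfolding inj_on_def by (metis le_antisym)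
    qed
    then have "g' = g" using principal_unique[OF g g'] b(3) True pg by fastforce
    moreover have "mindex js' = mindex js" using same \<open>a = a'\<close> by (simp add: fun_eq_iff)
    ultimately show ?thesis by simp
  qed
qed

lemma lead_term_isolated_rep:
  assumes "finite T" "T \<noteq> {}"
    and G: "\<And>x. x \<in> T \<Longrightarrow> G x \<in> E" and J: "\<And>x. x \<in> T \<Longrightarrow> length (J x) = s"
    and mult: "\<And>x. x \<in> T \<Longrightarrow> \<forall>j\<in>set (J x). multiplicative (G x) j"
    and rep: "\<And>x. x \<in> T \<Longrightarrow> x = ldiffs D (J x) (G x)"
  obtains x0 where "x0 \<in> T" "x0 (Some (lead_jet (G x0) (J x0))) = 1"
    "\<And>x. x \<in> T - {x0} \<Longrightarrow> x (Some (lead_jet (G x0) (J x0))) = 0"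
proof -
  let ?w = "\<lambda>x. mweight n pos (snd (lead_jet (G x) (J x)))"
  have "Max (?w ` T) \<in> ?w ` T" using assms(1,2) by simp
  then obtain x0 where x0: "x0 \<in> T" "?w x0 = Max (?w ` T)" by auto
  have heaviest: "?w x \<le> ?w x0" if "x \<in> T" for x using x0(2) assms(1) that by simp
  have "x (Some (lead_jet (G x0) (J x0))) = 0" if x: "x \<in> T - {x0}" for x
  proof (rule ccontr)
    assume "x (Some (lead_jet (G x0) (J x0))) \<noteq> 0"
    then have "?w x0 < ?w x \<or> (G x = G x0 \<and> mindex (J x) = mindex (J x0))"
      using x x0(1) rep[of x] J[of x] J[of x0]
      by (intro lead_jet_dominates[OF G G mult mult]) auto
    then show False
    proof
      assume "?w x0 < ?w x"
      then show False using heaviest[of x] x by simp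
    next
      assume same: "G x = G x0 \<and> mindex (J x) = mindex (J x0)"
      have "x = ldiffs D (J x) (G x0)" using rep[of x] x same by simp
      also have "\<dots> = ldiffs D (J x0) (G x0)"
        using ldiffs_perm[OF diff_field _ multiplicative_vars[OF mult[of x]]] x same by simp
      finally show False using x rep[OF x0(1)] by simp
    qed
  qed
  then show thesis
    using that[OF x0(1)] rep[OF x0(1)] ldiffs_lead_jet[OF G mult, OF x0(1) x0(1)] by simp
qed

lemma lead_term_isolated:
  assumes "finite T" "T \<noteq> {}"
    and rep: "\<And>x. x \<in> T \<Longrightarrow> \<exists>g js. Q g js \<and> g \<in> E \<and> length js = s
      \<and> (\<forall>j\<in>set js. multiplicative g j) \<and> x = ldiffs D js g"
  obtains x0 g0 js0 where "x0 \<in> T" "Q g0 js0" "g0 \<in> E" "length js0 = s"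
    "\<forall>j\<in>set js0. multiplicative g0 j" "x0 (Some (lead_jet g0 js0)) = 1"
    "\<And>x. x \<in> T - {x0} \<Longrightarrow> x (Some (lead_jet g0 js0)) = 0"
proof -
  have "\<forall>x\<in>T. \<exists>p. Q (fst p) (snd p) \<and> fst p \<in> E \<and> length (snd p) = s
      \<and> (\<forall>j\<in>set (snd p). multiplicative (fst p) j) \<and> x = ldiffs D (snd p) (fst p)"
    using rep by force
  from bchoice[OF this] obtain R where R: "\<forall>x\<in>T. Q (fst (R x)) (snd (R x)) \<and> fst (R x) \<in> E
      \<and> length (snd (R x)) = s \<and> (\<forall>j\<in>set (snd (R x)). multiplicative (fst (R x)) j)
      \<and> x = ldiffs D (snd (R x)) (fst (R x))"
    ..
  obtain x0 where x0: "x0 \<in> T" and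
    lead: "x0 (Some (lead_jet (fst (R x0)) (snd (R x0)))) = 1" and
    others: "\<And>x. x \<in> T - {x0} \<Longrightarrow> x (Some (lead_jet (fst (R x0)) (snd (R x0)))) = 0"
    by (rule lead_term_isolated_rep[OF assms(1,2), of "\<lambda>x. fst (R x)" "\<lambda>x. snd (R x)"])
      (use R in blast)+
  show thesis
    by (rule that[of x0 "fst (R x0)" "snd (R x0)"]) (use R x0 lead others in blast)+
qed

text \<open>The multiplicative prolongations of order \<open>r + 1\<close> are linearly independent modulo jets
of order \<open>\<le> r + 1\<close>.\<close>
lemma lspan_mprol_Suc_lower_order:
  assumes "P \<in> lspan (mprol (Suc r))" "ford n P \<le> Suc r"
  shows "P \<in> lspan (mprol r)"
proof -
  obtain F c where F: "finite F" "F \<subseteq> mprol (Suc r)" "P = (\<lambda>x. \<Sum>e\<in>F. c e * e x)"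
    using assms(1) unfolding lspan_def by auto
  define T where "T = {x\<in>F. c x \<noteq> 0 \<and> x \<notin> mprol r}"
  have "T = {}"
  proof (rule ccontr)
    assume "T \<noteq> {}"
    have rep: "\<exists>g js. True \<and> g \<in> E \<and> length js = Suc r \<and> (\<forall>j\<in>set js. multiplicative g j)
        \<and> x = ldiffs D js g" if x: "x \<in> T" for x
    proof -
      have "x \<in> mprol (Suc r)" using x F(2) unfolding T_def by auto
      then obtain g js where g: "g \<in> E" "length js \<le> Suc r" "\<forall>j\<in>set js. multiplicative g j"
          "x = ldiffs D js g"
        by (rule mprolE)
      moreover have "\<not> length js \<le> r" using mprolI[OF g(1) _ g(3)] g(4) x unfolding T_def by auto
      ultimately show ?thesis by (intro exI[of _ g] exI[of _ js]) simp
    qed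
    have "finite T" using F(1) unfolding T_def by simp
    obtain x0 g0 js0 where x0: "x0 \<in> T" and g0: "g0 \<in> E" "length js0 = Suc r"
        "\<forall>j\<in>set js0. multiplicative g0 j" and
      lead: "x0 (Some (lead_jet g0 js0)) = 1" and
      others: "\<And>x. x \<in> T - {x0} \<Longrightarrow> x (Some (lead_jet g0 js0)) = 0"
      by (rule lead_term_isolated[OF \<open>finite T\<close> \<open>T \<noteq> {}\<close>]) (erule rep, rule that)
    define J where "J = lead_jet g0 js0"
    have degJ: "deg n (snd J) = Suc (Suc r)"
      unfolding J_def deg_lead_jet[OF g0(1,3)] g0(2) ..
    have "c x * x (Some J) = 0" if x: "x \<in> F - {x0}" for x
    proof (cases "x \<in> mprol r")
      case True
      then obtain g js where g: "g \<in> E" "length js \<le> r" "\<forall>j\<in>set js. multiplicative g j"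
          "x = ldiffs D js g"
        by (rule mprolE)
      have "Suc (length js) < deg n (snd J)" using degJ g(2) by simp
      then have "x (Some (fst J, snd J)) = 0" unfolding g(4)
        by (rule ldiffs_coeff_beyond_top[OF diff_field multiplicative_vars[OF g(3)] wf_form[OF g(1)]
              first_order[OF g(1)]])
      then show ?thesis by simp
    qed (use x others[of x] J_def T_def in auto)
    then have "(\<Sum>x\<in>F. c x * x (Some J)) = c x0 * x0 (Some J)"
      using lcomb_eval_single[OF F(1), of x0 c "Some J"] x0 unfolding T_def by blast
    then have "P (Some J) = c x0" unfolding F(3) using lead J_def by simp
    moreover have "fsupp P" unfolding F(3) by (rule fsupp_lcomb[OF F(1)]) (use F(2) fsupp_mprol in blast)
    ultimately have "deg n (snd J) \<le> ford n P"
      using x0 deg_le_ford[of P "fst J" "snd J"] unfolding T_def by simp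
    then show False using degJ assms(2) by simp
  qed
  then show ?thesis
    by (intro lspan_if_nonzero_coeffs[OF F(1) F(3)]) (auto simp: T_def)
qed

theorem involutive_if_local:
  assumes local: "\<And>f j. f \<in> E \<Longrightarrow> j \<in> {1..n} \<Longrightarrow> ldiff D j f \<in> lspan (mult_prol D n pos E)"
  shows "involutive D n 1 pos E"
proof -
  have "solved_form n pos E"
    unfolding solved_form_def using principal_var principal_coeff principal_cls principal_unique
    by (intro exI[of _ pj]) blast
  moreover have "formally_integrable D n 1 E"
    unfolding formally_integrable_def
  proof (intro allI subsetI)
    fix r P assume "P \<in> {P \<in> lspan (prol D n E (Suc r)). ford n P \<le> 1 + r}"
    then have "P \<in> lspan (prol D n E (Suc r))" "ford n P \<le> Suc r" by auto
    then have "P \<in> lspan (mprol (Suc r))" "ford n P \<le> Suc r"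
      using lspan_subset_lspanI[OF prol_subset_lspan_mprol[OF local]] by blast+
    then have "P \<in> lspan (mprol r)" by (rule lspan_mprol_Suc_lower_order)
    then show "P \<in> lspan (prol D n E r)" using lspan_mono[OF mprol_subset_prol] by blast
  qed
  moreover have "lspan (prol D n E 1) = lspan (mult_prol D n pos E)"
    using lspan_subset_lspanI[OF prol_subset_lspan_mprol[OF local, of 1]]
      lspan_mono[OF mprol_subset_prol[of 1]] mprol_1 by auto
  ultimately show ?thesis unfolding involutive_def by simp
qed

end

section \<open>Subsystems of low class\<close>

context solved_system
begin

lemma mult_prolE:
  assumes "x \<in> mult_prol D n pos E"
  obtains "x \<in> E" | g l where "g \<in> E" "multiplicative g l" "x = ldiff D l g"
  using assms unfolding mult_prol_def multiplicative_def by blast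

lemma ldiff_low_class_second_order:
  assumes g: "g \<in> E" "cls n pos g \<le> i" and l: "l \<in> {1..n}" "pos l \<le> i"
    and \<mu>: "deg n \<mu> = 2" "i < pos a" "0 < \<mu> a"
  shows "ldiff D l g (Some (k, \<mu>)) = 0"
proof (rule ccontr)
  assume nz: "ldiff D l g (Some (k, \<mu>)) \<noteq> 0"
  obtain b where b: "b \<in> {1..n}" "\<mu> = mplus (mindex [l]) (unitv b)" "g (Some (k, unitv b)) \<noteq> 0"
  proof (rule ldiffs_coeff_top_nonzero[OF diff_field _ wf_form[OF g(1)] first_order[OF g(1)]])
    show "set [l] \<subseteq> {1..n}" "deg n \<mu> = Suc (length [l])" "ldiffs D [l] g (Some (k, \<mu>)) \<noteq> 0"
      using l(1) \<mu>(1) nz by simp_all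
  qed
  have "pos b \<le> i" using jet_var_le_cls[where pos=pos, OF wf_form[OF g(1)] b(3)] g(2) by simp
  then have "\<mu> a = 0" using b(2) l(2) \<mu>(2) unfolding mplus_def mindex_def unitv_def by auto
  then show False using \<mu>(3) by simp
qed

lemma ldiff_low_class_first_order:
  assumes "g \<in> E" "cls n pos g \<le> i" "l \<in> {1..n}" "pos l \<le> i" "i < pos a"
  shows "ldiff D l g (Some (k, unitv a)) = 0"
proof -
  have "g (Some (k, unitv a)) = 0"
    using jet_var_le_cls[where pos=pos, OF wf_form[OF assms(1)], of k a] assms(2,5) by fastforce
  moreover have "unitv a l = 0" using assms(4,5) unfolding unitv_def by auto
  ultimately show ?thesis using diff_field_zero[OF diff_field assms(3)] by simp
qed

text \<open>The heaviest leading jet among the prolongations of equations of class \<open>> i\<close> occurs in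
no other term of the combination, but has order \<open>2\<close> and involves a derivative of rank \<open>> i\<close>.\<close>
lemma high_class_prolongations_cancel:
  assumes F: "finite F" "F \<subseteq> mult_prol D n pos E" "P = (\<lambda>x. \<Sum>e\<in>F. c e * e x)"
    and P2: "\<And>k \<mu> a. deg n \<mu> = 2 \<Longrightarrow> i < pos a \<Longrightarrow> 0 < \<mu> a \<Longrightarrow> P (Some (k, \<mu>)) = 0"
    and x: "x \<in> F" "c x \<noteq> 0" "g \<in> E" "multiplicative g l" "x = ldiff D l g"
  shows "cls n pos g \<le> i"
proof -
  define T where "T = {x\<in>F. c x \<noteq> 0 \<and> (\<exists>g l. g \<in> E \<and> i < cls n pos g \<and> multiplicative g l
      \<and> x = ldiff D l g)}"
  have "T = {}"
  proof (rule ccontr)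
    assume "T \<noteq> {}"
    have rep: "\<exists>g js. i < cls n pos g \<and> g \<in> E \<and> length js = 1 \<and> (\<forall>j\<in>set js. multiplicative g j)
        \<and> x = ldiffs D js g" if "x \<in> T" for x
      using that unfolding T_def by (force intro: exI[of _ "[_]"])
    have "finite T" using F(1) unfolding T_def by simp
    obtain x0 g0 js0 where x0: "x0 \<in> T" and g0: "i < cls n pos g0" "g0 \<in> E" "length js0 = 1"
        "\<forall>j\<in>set js0. multiplicative g0 j" and
      lead: "x0 (Some (lead_jet g0 js0)) = 1" and
      others: "\<And>x. x \<in> T - {x0} \<Longrightarrow> x (Some (lead_jet g0 js0)) = 0"
      by (rule lead_term_isolated[OF \<open>finite T\<close> \<open>T \<noteq> {}\<close>]) (erule rep, rule that)
    define J where "J = lead_jet g0 js0"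
    have degJ: "deg n (snd J) = 2" unfolding J_def using deg_lead_jet[OF g0(2,4)] g0(3) by simp
    have J_high: "0 < snd J (snd (pj g0))" "i < pos (snd (pj g0))"
      unfolding J_def lead_jet_def mplus_def unitv_def using principal_cls[OF g0(2)] g0(1) by auto
    have "c y * y (Some (fst J, snd J)) = 0" if y: "y \<in> F - {x0}" for y
    proof (cases "c y = 0")
      case False
      have "y \<in> mult_prol D n pos E" using y F(2) by auto
      then have "y (Some (fst J, snd J)) = 0"
      proof (cases rule: mult_prolE)
        case 1
        then show ?thesis
          using first_order_coeff_beyond[OF wf_form[OF 1] first_order[OF 1], of "snd J" "fst J"] degJ
          by simp
      next
        case (2 g l)
        show ?thesis
        proof (cases "cls n pos g \<le> i")
          case True
          have "ldiff D l g (Some (fst J, snd J)) = 0"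
            by (rule ldiff_low_class_second_order[OF 2(1) True _ _ degJ J_high(2,1)])
              (use 2(2) True in \<open>simp_all add: multiplicative_def\<close>)
          then show ?thesis unfolding 2(3) .
        next
          case False
          then have "y \<in> T" using y 2 \<open>c y \<noteq> 0\<close> unfolding T_def by auto
          then show ?thesis using others y J_def by simp
        qed
      qed
      then show ?thesis by simp
    qed simp
    then have "P (Some J) = c x0"
      using lcomb_eval_single[OF F(1), of x0 c "Some J"] x0 lead F(3) unfolding T_def J_def by simp
    moreover have "P (Some J) = 0" using P2[of "snd J" _ "fst J"] degJ J_high by simp
    ultimately show False using x0 unfolding T_def by simp
  qed
  then have "\<not> i < cls n pos g" using x unfolding T_def by blast
  then show ?thesis by simp
qed

text \<open>Compare coefficients at the principal jet of an equation of class \<open>> i\<close>.\<close>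
lemma high_class_equations_cancel:
  assumes F: "finite F" "F \<subseteq> mult_prol D n pos E" "P = (\<lambda>x. \<Sum>e\<in>F. c e * e x)"
    and P1: "\<And>k a. i < pos a \<Longrightarrow> P (Some (k, unitv a)) = 0"
    and low: "\<And>y g l. y \<in> F \<Longrightarrow> c y \<noteq> 0 \<Longrightarrow> g \<in> E \<Longrightarrow> multiplicative g l \<Longrightarrow> y = ldiff D l g
      \<Longrightarrow> cls n pos g \<le> i"
    and x: "x \<in> F" "c x \<noteq> 0" "x \<in> E"
  shows "cls n pos x \<le> i"
proof (rule ccontr)
  assume high: "\<not> cls n pos x \<le> i"
  define J where "J = Some (fst (pj x), unitv (snd (pj x)))"
  have "c y * y J = 0" if y: "y \<in> F - {x}" for y
  proof (cases "c y = 0")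
    case False
    have "y \<in> mult_prol D n pos E" using y F(2) by auto
    then have "y J = 0"
    proof (cases rule: mult_prolE)
      case 1
      then show ?thesis using principal_unique[OF x(3)] y unfolding J_def by simp
    next
      case (2 g l)
      have "cls n pos g \<le> i" using low[OF _ False 2] y by simp
      then show ?thesis unfolding 2(3) J_def
        using ldiff_low_class_first_order[OF 2(1)] 2(2) high principal_cls[OF x(3)]
        unfolding multiplicative_def by simp
    qed
    then show ?thesis by simp
  qed simp
  then have "P J = c x" using lcomb_eval_single[OF F(1) x(1)] principal_coeff[OF x(3)] F(3)
    unfolding J_def by simp
  moreover have "P J = 0" using P1 high principal_cls[OF x(3)] unfolding J_def by simp
  ultimately show False using x(2) by simp
qed

theorem ldiff_low_class_in_lspan_subsystem:
  assumes inv: "lspan (prol D n E 1) = lspan (mult_prol D n pos E)"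
    and f: "f \<in> E" "cls n pos f \<le> i" and j: "j \<in> {1..n}" "pos j \<le> i"
  shows "ldiff D j f \<in> lspan (mult_prol D n pos {e\<in>E. cls n pos e \<le> i})"
proof -
  let ?P = "ldiff D j f"
  have "?P \<in> lspan (prol D n E 1)" using f j by (intro lspan_base) auto
  then have "?P \<in> lspan (mult_prol D n pos E)" using inv by simp
  then obtain F c where F: "finite F" "F \<subseteq> mult_prol D n pos E" "?P = (\<lambda>x. \<Sum>e\<in>F. c e * e x)"
    unfolding lspan_def by blast
  have P2: "\<And>k \<mu> a. deg n \<mu> = 2 \<Longrightarrow> i < pos a \<Longrightarrow> 0 < \<mu> a \<Longrightarrow> ?P (Some (k, \<mu>)) = 0"
    by (rule ldiff_low_class_second_order[OF f j])
  have P1: "\<And>k a. i < pos a \<Longrightarrow> ?P (Some (k, unitv a)) = 0"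
    by (rule ldiff_low_class_first_order[OF f j])
  have low: "cls n pos g \<le> i"
    if "y \<in> F" "c y \<noteq> 0" "g \<in> E" "multiplicative g l" "y = ldiff D l g" for y g l
    by (rule high_class_prolongations_cancel[OF F _ that]) (rule P2)
  show ?thesis
  proof (rule lspan_if_nonzero_coeffs[OF F(1) F(3)])
    fix x assume x: "x \<in> F" "c x \<noteq> 0"
    then have "x \<in> mult_prol D n pos E" using F(2) by auto
    then show "x \<in> mult_prol D n pos {e\<in>E. cls n pos e \<le> i}"
    proof (cases rule: mult_prolE)
      case 1
      have "cls n pos x \<le> i"
        by (rule high_class_equations_cancel[OF F _ _ x 1]) (assumption | rule P1 low)+
      then show ?thesis using 1 unfolding mult_prol_def by simp
    next
      case (2 g l)
      then show ?thesis using low[OF x 2] unfolding mult_prol_def multiplicative_def by blast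
    qed
  qed
qed

end

section \<open>Reordering the independent variables\<close>

lemma solved_system_if_solved_form:
  assumes "diff_field n D" "linear_first_order_system n m E" "solved_form n pos E" "inj_on pos {1..n}"
  obtains pj where "solved_system D n m pos E pj"
proof -
  obtain pj where "\<forall>e\<in>E. snd (pj e) \<in> {1..n} \<and> e (Some (fst (pj e), unitv (snd (pj e)))) = 1
      \<and> pos (snd (pj e)) = cls n pos e"
    and "\<forall>e\<in>E. \<forall>e'\<in>E. e' \<noteq> e \<longrightarrow> e' (Some (fst (pj e), unitv (snd (pj e)))) = 0"
    using assms(3) unfolding solved_form_def by blast
  then have "solved_system D n m pos E pj"
    using assms(1,2,4) unfolding linear_first_order_system_def by unfold_locales auto
  then show thesis by (rule that)
qed

lemma inj_on_shift_order: "i \<in> {1..n} \<Longrightarrow> inj_on (shift_order n i) {1..n}"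
  unfolding inj_on_def shift_order_def by auto

lemma cls_eq_Max_image:
  "cls n pos e = Max (insert 0 (pos ` {j\<in>{1..n}. \<exists>k. e (Some (k, unitv j)) \<noteq> 0}))"
  unfolding cls_def by (rule arg_cong[where f = "\<lambda>A. Max (insert 0 A)"]) auto

lemma cls_shift_order:
  assumes "wf_form n m e" "e (Some (k, unitv j)) \<noteq> 0" "cls n id e \<le> i"
  shows "cls n (shift_order n i) e = cls n id e + (n - i)"
proof -
  let ?S = "{j\<in>{1..n}. \<exists>k. e (Some (k, unitv j)) \<noteq> 0}"
  have ne: "?S \<noteq> {}" using assms(1,2) wf_form_jet_var by blast
  have "j \<le> i" if "j \<in> ?S" for j
    using jet_var_le_cls[OF assms(1), where pos=id] that assms(3) by force
  then have "shift_order n i ` ?S = (\<lambda>j. j + (n - i)) ` ?S"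
    unfolding shift_order_def by (intro image_cong) auto
  then have "cls n (shift_order n i) e = Max ((\<lambda>j. j + (n - i)) ` ?S)"
    unfolding cls_eq_Max_image using ne by (simp add: Max_insert)
  also have "\<dots> = Max ?S + (n - i)"
    using mono_Max_commute[of "\<lambda>j. j + (n - i)" ?S] ne by (simp add: mono_def)
  also have "Max ?S = cls n id e"
    unfolding cls_eq_Max_image using ne by (simp add: Max_insert)
  finally show ?thesis .
qed

context solved_system
begin

lemma cls_shift_order_low_class:
  assumes "e \<in> E" "cls n id e \<le> i"
  shows "cls n (shift_order n i) e = cls n id e + (n - i)"
proof -
  have "e (Some (fst (pj e), unitv (snd (pj e)))) \<noteq> 0" using principal_coeff[OF assms(1)] by simp
  then show ?thesis by (rule cls_shift_order[OF wf_form[OF assms(1)] _ assms(2)])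
qed

lemma mult_prol_shift_order:
  "mult_prol D n id {e\<in>E. cls n id e \<le> i} \<subseteq> mult_prol D n (shift_order n i) {e\<in>E. cls n id e \<le> i}"
    (is "_ \<subseteq> mult_prol D n _ ?Ei")
proof
  fix x assume "x \<in> mult_prol D n id ?Ei"
  then consider "x \<in> ?Ei" | j e where "e \<in> ?Ei" "j \<in> {1..n}" "j \<le> cls n id e" "x = ldiff D j e"
    unfolding mult_prol_def by auto
  then show "x \<in> mult_prol D n (shift_order n i) ?Ei"
  proof cases
    case 2
    then have "shift_order n i j \<le> cls n (shift_order n i) e"
      using cls_shift_order_low_class unfolding shift_order_def by auto
    then show ?thesis using 2 unfolding mult_prol_def by blast
  qed (simp add: mult_prol_def)
qed

end

lemma solved_system_shift_order:
  assumes "solved_system D n m id E pj" "i \<in> {1..n}"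
  shows "solved_system D n m (shift_order n i) {e\<in>E. cls n id e \<le> i} pj"
proof -
  interpret solved_system D n m id E pj by (rule assms(1))
  show ?thesis
  proof unfold_locales
    fix e assume e: "e \<in> {e\<in>E. cls n id e \<le> i}"
    then have "snd (pj e) = cls n id e" "cls n id e \<le> i" using principal_cls by auto
    then show "shift_order n i (snd (pj e)) = cls n (shift_order n i) e"
      using cls_shift_order_low_class e unfolding shift_order_def by simp
  qed (use diff_field wf_form first_order inj_on_shift_order[OF assms(2)] principal_var
      principal_coeff principal_unique in auto)
qed

theorem proposition5p5:
  fixes D :: "nat \<Rightarrow> 'a::field \<Rightarrow> 'a" and n m i :: nat and E :: "'a lform set"
  assumes "diff_field n D"
    and "linear_first_order_system n m E"
    and "no_zero_order n E"
    and "delta_regular D n m E"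
    and "solved_form n id E"
    and "involutive D n 1 id E"
    and "i \<in> {1..n}"
  shows "(\<forall>e\<in>{e\<in>E. cls n id e \<le> i}. \<forall>k j. e (Some (k, unitv j)) \<noteq> 0 \<longrightarrow> j \<le> i)
       \<and> involutive D n 1 (shift_order n i) {e\<in>E. cls n id e \<le> i}"
proof -
  obtain pj where "solved_system D n m id E pj"
    using assms(1,2,5) by (rule solved_system_if_solved_form) simp
  then interpret S: solved_system D n m id E pj .
  let ?Ei = "{e\<in>E. cls n id e \<le> i}"
  interpret T: solved_system D n m "shift_order n i" ?Ei pj
    using solved_system_shift_order[OF S.solved_system_axioms assms(7)] .
  have "ldiff D j f \<in> lspan (mult_prol D n (shift_order n i) ?Ei)" if f: "f \<in> ?Ei" "j \<in> {1..n}" for f j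
  proof (cases "j \<le> i")
    case True
    then have "ldiff D j f \<in> lspan (mult_prol D n id ?Ei)"
      using S.ldiff_low_class_in_lspan_subsystem assms(6) f unfolding involutive_def by simp
    then show ?thesis using lspan_mono[OF S.mult_prol_shift_order] by blast
  next
    case False
    then have "shift_order n i j \<le> cls n (shift_order n i) f"
      using f S.cls_shift_order_low_class unfolding shift_order_def by auto
    then show ?thesis using f unfolding mult_prol_def by (blast intro: lspan_base)
  qed
  then show ?thesis using jet_var_le_cls[OF S.wf_form, where pos=id] T.involutive_if_local by force
qed

end
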